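(* Let $M\in\mathbb S^n$ with largest eigenvalue $\lambda_1>0$ and smallest eigenvalue $\lambda_n\le0$, $\beta\in\mathbb R^n$, $\gamma\in\mathbb R$, $\phi(x)=x^TMx-2\beta^Tx+\gamma$, $\mathcal Q=\{x:\phi(x)\le0\}$. Let $x_0\in\mathcal Q$, $r>0$, and let $u_n$ be a unit eigenvector of $M$ for $\lambda_n$. Denote by $B(y,r)$ the closed Euclidean ball of radius $r$ around $y$. (i) If $\lambda_n=0$ and $\beta^Tu_n>0$, then for all $\theta\ge\Theta_0:=\dfrac{r^2\lambda_1+2r\|Mx_0-\beta\|_2}{2\beta^Tu_n}$ we have $B(x_0+\theta u_n,r)\subseteq\mathcal Q$. (ii) If $\lambda_n<0$ (and $u_n$ is normalized so that $\beta^Tu_n\ge0$), let $b_0:=\lambda_nx_0^Tu_n-\beta^Tu_n+r|\lambda_n|$ and $$\Theta_-:=\frac{-b_0-\sqrt{b_0^2-\lambda_n(r^2\lambda_1+2r\|Mx_0-\beta\|_2)}}{\lambda_n}.$$ Then for all $\theta\ge\Theta_-$ we have $B(x_0+\theta u_n,r)\subseteq\mathcal Q$.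
   Context: $\mathbb S^n$ denotes the real symmetric $n\times n$ matrices. *)

theory Defs
  imports "HOL-Analysis.Analysis"
begin

definition symmetric_matrix :: "real^'n^'n \<Rightarrow> bool" where
  "symmetric_matrix M \<longleftrightarrow> transpose M = M"

definition is_eigenvalue :: "real^'n^'n \<Rightarrow> real \<Rightarrow> bool" where
  "is_eigenvalue M l \<longleftrightarrow> (\<exists>v. v \<noteq> 0 \<and> M *v v = l *\<^sub>R v)"

definition is_largest_eigenvalue :: "real^'n^'n \<Rightarrow> real \<Rightarrow> bool" where
  "is_largest_eigenvalue M l \<longleftrightarrow> is_eigenvalue M l \<and> (\<forall>m. is_eigenvalue M m \<longrightarrow> m \<le> l)"

definition is_smallest_eigenvalue :: "real^'n^'n \<Rightarrow> real \<Rightarrow> bool" where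
  "is_smallest_eigenvalue M l \<longleftrightarrow> is_eigenvalue M l \<and> (\<forall>m. is_eigenvalue M m \<longrightarrow> l \<le> m)"

definition qphi :: "real^'n^'n \<Rightarrow> real^'n \<Rightarrow> real \<Rightarrow> real^'n \<Rightarrow> real" where
  "qphi M beta gamma x = x \<bullet> (M *v x) - 2 * (beta \<bullet> x) + gamma"

definition qset :: "real^'n^'n \<Rightarrow> real^'n \<Rightarrow> real \<Rightarrow> (real^'n) set" where
  "qset M beta gamma = {x. qphi M beta gamma x \<le> 0}"

end

theory Submission
  imports Defs
begin

text \<open>Write a point of the ball as \<open>y = x0 + \<theta> u + z\<close> with \<open>\<parallel>z\<parallel> \<le> r\<close>. Since \<open>u\<close> is an
  eigenvector for \<open>\<lambda>\<^sub>n\<close> and \<open>z\<^sup>T M z \<le> \<lambda>\<^sub>1 \<parallel>z\<parallel>\<^sup>2\<close> (Rayleigh), expanding \<open>\<phi>\<close> around \<open>x0\<close> and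
  using Cauchy-Schwarz gives
  \<open>\<phi>(y) \<le> \<lambda>\<^sub>n \<theta>\<^sup>2 + 2 \<theta> b\<^sub>0 + r\<^sup>2 \<lambda>\<^sub>1 + 2 r \<parallel>M x0 - \<beta>\<parallel>\<close> for \<open>\<theta> \<ge> 0\<close>.
  For \<open>\<lambda>\<^sub>n = 0\<close> the right-hand side is linear in \<open>\<theta>\<close> with slope \<open>-2 \<beta>\<^sup>T u < 0\<close>; for
  \<open>\<lambda>\<^sub>n < 0\<close> it is a concave quadratic whose larger root is \<open>\<Theta>\<^sub>-\<close>.\<close>

lemma symmetric_matrix_inner_swap:
  assumes "symmetric_matrix M"
  shows "x \<bullet> (M *v y) = y \<bullet> (M *v x)"
proof -
  have "x \<bullet> (M *v y) = (transpose M *v x) \<bullet> y" by (simp add: dot_lmul_matrix)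
  with assms show ?thesis by (simp add: symmetric_matrix_def inner_commute)
qed

lemma linear_coeff_zero_if_quadratic_nonneg:
  fixes a c :: real
  assumes "\<And>t. 0 \<le> 2 * t * c + t\<^sup>2 * a"
  shows "c = 0"
proof -
  define K where "K = \<bar>a\<bar> + 1"
  have K: "K > 0" by (simp add: K_def)
  have "0 \<le> 2 * (- c / K) * c + (- c / K)\<^sup>2 * a" by (rule assms)
  also have "\<dots> = c\<^sup>2 * (a - 2 * K) / K\<^sup>2"
    using K by (simp add: field_simps power2_eq_square)
  finally have "0 \<le> c\<^sup>2 * (a - 2 * K)" using K by (simp add: zero_le_divide_iff)
  moreover have "a - 2 * K < 0" by (simp add: K_def)
  ultimately have "c\<^sup>2 \<le> 0" by (simp add: zero_le_mult_iff)
  then show "c = 0" by simp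
qed

text \<open>A unit vector maximising the Rayleigh quotient is an eigenvector: the form
  \<open>\<mu>\<parallel>x\<parallel>\<^sup>2 - x\<^sup>T M x\<close> is nonnegative and vanishes at \<open>v\<close>, so its polar form vanishes at \<open>(v, w)\<close>.\<close>

lemma rayleigh_maximiser_is_eigenvector:
  fixes M :: "real^'n^'n"
  assumes sym: "symmetric_matrix M" and nv: "norm v = 1"
    and max: "\<And>y. y \<bullet> (M *v y) \<le> (v \<bullet> (M *v v)) * (norm y)\<^sup>2"
  shows "M *v v = (v \<bullet> (M *v v)) *\<^sub>R v"
proof -
  define \<mu> where "\<mu> = v \<bullet> (M *v v)"
  define p where "p y = \<mu> * (norm y)\<^sup>2 - y \<bullet> (M *v y)" for y
  have vv: "v \<bullet> v = 1" using nv by (simp add: norm_eq_sqrt_inner)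
  have polar_zero: "\<mu> * (v \<bullet> w) - w \<bullet> (M *v v) = 0" for w
  proof (rule linear_coeff_zero_if_quadratic_nonneg)
    fix t
    have "(norm (v + t *\<^sub>R w))\<^sup>2 = 1 + 2 * t * (v \<bullet> w) + t\<^sup>2 * (norm w)\<^sup>2"
      unfolding power2_norm_eq_inner
      by (simp add: inner_add_left inner_add_right vv inner_commute power2_eq_square algebra_simps)
    then have "p (v + t *\<^sub>R w) = 2 * t * (\<mu> * (v \<bullet> w) - w \<bullet> (M *v v)) + t\<^sup>2 * p w"
      using symmetric_matrix_inner_swap[OF sym, of v w]
      by (simp add: p_def \<mu>_def matrix_vector_right_distrib matrix_vector_mult_scaleR
          inner_add_left inner_add_right power2_eq_square algebra_simps)
    moreover have "0 \<le> p (v + t *\<^sub>R w)" using max by (simp add: p_def \<mu>_def)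
    ultimately show "0 \<le> 2 * t * (\<mu> * (v \<bullet> w) - w \<bullet> (M *v v)) + t\<^sup>2 * p w" by simp
  qed
  define w where "w = \<mu> *\<^sub>R v - M *v v"
  have "w \<bullet> w = \<mu> * (v \<bullet> w) - w \<bullet> (M *v v)"
    by (simp add: w_def inner_diff_left inner_diff_right inner_commute algebra_simps)
  with polar_zero have "w = 0" by simp
  then show ?thesis by (simp add: w_def \<mu>_def)
qed

lemma quadratic_form_le_largest_eigenvalue:
  fixes M :: "real^'n^'n"
  assumes sym: "symmetric_matrix M" and lam1: "is_largest_eigenvalue M lam1"
  shows "z \<bullet> (M *v z) \<le> lam1 * (norm z)\<^sup>2"
proof -
  let ?q = "\<lambda>z::real^'n. z \<bullet> (M *v z)"
  have "continuous_on (sphere 0 1) ?q"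
    by (intro continuous_intros continuous_on_compose2[OF matrix_vector_mult_linear_continuous_on[of UNIV M]])
      auto
  moreover have "sphere (0::real^'n) 1 \<noteq> {}" by simp
  ultimately obtain v where v: "v \<in> sphere 0 1" and vmax: "\<And>y. y \<in> sphere 0 1 \<Longrightarrow> ?q y \<le> ?q v"
    using continuous_attains_sup[OF compact_sphere] by blast
  have bound: "?q y \<le> ?q v * (norm y)\<^sup>2" for y
  proof (cases "y = 0")
    case False
    have "?q ((1 / norm y) *\<^sub>R y) \<le> ?q v" using False by (intro vmax) simp
    moreover have "?q ((1 / norm y) *\<^sub>R y) = ?q y / (norm y)\<^sup>2"
      by (simp add: matrix_vector_mult_scaleR power2_eq_square)
    ultimately have "?q y / (norm y)\<^sup>2 \<le> ?q v" by simp
    then show ?thesis using False by (simp add: pos_divide_le_eq)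
  qed simp
  have "norm v = 1" using v by simp
  then have "M *v v = ?q v *\<^sub>R v" "v \<noteq> 0"
    using rayleigh_maximiser_is_eigenvector[OF sym _ bound] by auto
  then have "?q v \<le> lam1"
    using lam1 unfolding is_largest_eigenvalue_def is_eigenvalue_def by blast
  then show ?thesis using bound[of z] by (smt (verit) mult_right_mono zero_le_power2)
qed

lemma qphi_add:
  assumes "symmetric_matrix M"
  shows "qphi M beta gamma (x + h) = qphi M beta gamma x + 2 * (h \<bullet> (M *v x - beta)) + h \<bullet> (M *v h)"
  using symmetric_matrix_inner_swap[OF assms, of x h]
  by (simp add: qphi_def matrix_vector_right_distrib inner_add_left inner_add_right
      inner_diff_right algebra_simps inner_commute[of beta])

lemma qphi_on_shifted_ball_le:
  fixes M :: "real^'n^'n"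
  assumes sym: "symmetric_matrix M"
    and lam1: "is_largest_eigenvalue M lam1" and "lam1 \<ge> 0"
    and x0: "x0 \<in> qset M beta gamma"
    and Mu: "M *v u = lamn *\<^sub>R u" and nu: "norm u = 1"
    and theta: "theta \<ge> 0" and y: "y \<in> cball (x0 + theta *\<^sub>R u) r"
  shows "qphi M beta gamma y \<le> lamn * theta\<^sup>2
     + 2 * theta * (lamn * (x0 \<bullet> u) - beta \<bullet> u + r * \<bar>lamn\<bar>)
     + (r\<^sup>2 * lam1 + 2 * r * norm (M *v x0 - beta))"
proof -
  define z where "z = y - x0 - theta *\<^sub>R u"
  define g where "g = M *v x0 - beta"
  have nz: "norm z \<le> r" using y by (simp add: z_def dist_norm norm_minus_commute algebra_simps)
  have uu: "u \<bullet> u = 1" using nu by (simp add: norm_eq_sqrt_inner)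
  have uMz: "u \<bullet> (M *v z) = lamn * (z \<bullet> u)"
    using symmetric_matrix_inner_swap[OF sym, of u z] Mu by simp
  have ug: "u \<bullet> g = lamn * (x0 \<bullet> u) - beta \<bullet> u"
    using symmetric_matrix_inner_swap[OF sym, of u x0] Mu by (simp add: g_def inner_diff_right inner_commute)
  have "qphi M beta gamma y = qphi M beta gamma x0 + 2 * ((theta *\<^sub>R u + z) \<bullet> g)
      + (theta *\<^sub>R u + z) \<bullet> (M *v (theta *\<^sub>R u + z))"
    using qphi_add[OF sym, of beta gamma x0 "theta *\<^sub>R u + z"] by (simp add: z_def g_def)
  also have "\<dots> = qphi M beta gamma x0 + 2 * theta * (u \<bullet> g + lamn * (z \<bullet> u))
      + lamn * theta\<^sup>2 + 2 * (z \<bullet> g) + z \<bullet> (M *v z)"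
    using Mu uMz uu
    by (simp add: matrix_vector_right_distrib matrix_vector_mult_scaleR inner_add_left
        inner_add_right power2_eq_square algebra_simps)
  finally have expansion: "qphi M beta gamma y = \<dots>" .
  have "qphi M beta gamma x0 \<le> 0" using x0 by (simp add: qset_def)
  moreover have "theta * (lamn * (z \<bullet> u)) \<le> theta * (r * \<bar>lamn\<bar>)"
  proof (rule mult_left_mono[OF _ theta])
    have "\<bar>z \<bullet> u\<bar> \<le> r" using Cauchy_Schwarz_ineq2[of z u] nu nz by simp
    then have "\<bar>lamn\<bar> * \<bar>z \<bullet> u\<bar> \<le> \<bar>lamn\<bar> * r" by (simp add: mult_left_mono)
    then show "lamn * (z \<bullet> u) \<le> r * \<bar>lamn\<bar>"
      using abs_ge_self[of "lamn * (z \<bullet> u)"] by (simp add: abs_mult mult.commute)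
  qed
  moreover have "z \<bullet> g \<le> r * norm g"
    using norm_cauchy_schwarz[of z g] mult_right_mono[OF nz norm_ge_zero[of g]] by linarith
  moreover have "z \<bullet> (M *v z) \<le> r\<^sup>2 * lam1"
  proof -
    have "z \<bullet> (M *v z) \<le> lam1 * (norm z)\<^sup>2"
      by (rule quadratic_form_le_largest_eigenvalue[OF sym lam1])
    also have "\<dots> \<le> lam1 * r\<^sup>2" using nz \<open>lam1 \<ge> 0\<close> by (intro mult_left_mono power_mono) auto
    finally show ?thesis by (simp add: mult.commute)
  qed
  ultimately show ?thesis
    unfolding expansion ug g_def[symmetric] by (simp add: algebra_simps)
qed

lemma concave_quadratic_nonpos_beyond_larger_root:
  fixes a b c theta :: real
  assumes a: "a < 0" and c: "c \<ge> 0" and theta: "theta \<ge> (- b - sqrt (b\<^sup>2 - a * c)) / a"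
  shows "theta \<ge> 0" and "a * theta\<^sup>2 + 2 * theta * b + c \<le> 0"
proof -
  define s where "s = sqrt (b\<^sup>2 - a * c)"
  have rad: "b\<^sup>2 \<le> b\<^sup>2 - a * c" using a c by (simp add: mult_nonpos_nonneg)
  then have s2: "s\<^sup>2 = b\<^sup>2 - a * c" unfolding s_def by (smt (verit) real_sqrt_pow2 zero_le_power2)
  have s_ge: "\<bar>b\<bar> \<le> s" unfolding s_def using rad by (metis real_sqrt_abs real_sqrt_le_mono)
  define t1 where "t1 = (- b - s) / a"
  define t2 where "t2 = (- b + s) / a"
  have "0 \<le> t1" unfolding t1_def using s_ge a by (intro divide_nonpos_neg) auto
  moreover have "t2 \<le> t1" unfolding t1_def t2_def using a s_ge by (intro divide_right_mono_neg) auto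
  moreover have "t1 \<le> theta" using theta by (simp add: t1_def s_def)
  ultimately show "theta \<ge> 0" by linarith
  have "a * (theta - t1) * (theta - t2) = a * theta\<^sup>2 + 2 * theta * b + (b\<^sup>2 - s\<^sup>2) / a"
    unfolding t1_def t2_def using a by (simp add: field_simps power2_eq_square)
  then have "a * theta\<^sup>2 + 2 * theta * b + c = a * (theta - t1) * (theta - t2)"
    using a s2 by simp
  also have "\<dots> \<le> 0"
    using a \<open>t2 \<le> t1\<close> \<open>t1 \<le> theta\<close> by (intro mult_nonpos_nonneg) (auto intro: mult_nonpos_nonneg)
  finally show "a * theta\<^sup>2 + 2 * theta * b + c \<le> 0" .
qed

theorem proposition5p3:
  fixes M :: "real^'n^'n" and beta x0 u :: "real^'n" and gamma r lam1 lamn :: real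
  assumes "symmetric_matrix M"
    and "is_largest_eigenvalue M lam1" and "lam1 > 0"
    and "is_smallest_eigenvalue M lamn" and "lamn \<le> 0"
    and "x0 \<in> qset M beta gamma" and "r > 0"
    and "M *v u = lamn *\<^sub>R u" and "norm u = 1"
  shows "(lamn = 0 \<and> beta \<bullet> u > 0 \<longrightarrow>
            (\<forall>theta. theta \<ge> (r^2 * lam1 + 2 * r * norm (M *v x0 - beta)) / (2 * (beta \<bullet> u)) \<longrightarrow>
               cball (x0 + theta *\<^sub>R u) r \<subseteq> qset M beta gamma))
       \<and> (lamn < 0 \<and> beta \<bullet> u \<ge> 0 \<longrightarrow>
            (let b0 = lamn * (x0 \<bullet> u) - beta \<bullet> u + r * \<bar>lamn\<bar>
             in \<forall>theta. theta \<ge> (- b0 - sqrt (b0^2 - lamn * (r^2 * lam1 + 2 * r * norm (M *v x0 - beta)))) / lamn \<longrightarrow>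
               cball (x0 + theta *\<^sub>R u) r \<subseteq> qset M beta gamma))"
proof -
  define C where "C = r\<^sup>2 * lam1 + 2 * r * norm (M *v x0 - beta)"
  define b0 where "b0 = lamn * (x0 \<bullet> u) - beta \<bullet> u + r * \<bar>lamn\<bar>"
  have C: "C \<ge> 0" using assms(3,7) by (simp add: C_def)
  have ball_in_Q: "cball (x0 + theta *\<^sub>R u) r \<subseteq> qset M beta gamma"
    if "theta \<ge> 0" "lamn * theta\<^sup>2 + 2 * theta * b0 + C \<le> 0" for theta
  proof
    fix y
    assume "y \<in> cball (x0 + theta *\<^sub>R u) r"
    then have "qphi M beta gamma y \<le> lamn * theta\<^sup>2 + 2 * theta * b0 + C"
      using qphi_on_shifted_ball_le[OF assms(1,2) _ assms(6,8,9) that(1)] assms(3)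
      by (simp add: C_def b0_def)
    with that(2) show "y \<in> qset M beta gamma" by (simp add: qset_def)
  qed
  have "cball (x0 + theta *\<^sub>R u) r \<subseteq> qset M beta gamma"
    if "lamn = 0" "beta \<bullet> u > 0" "theta \<ge> C / (2 * (beta \<bullet> u))" for theta
  proof (rule ball_in_Q)
    show "theta \<ge> 0" using that C by (smt (verit) divide_nonneg_pos)
    show "lamn * theta\<^sup>2 + 2 * theta * b0 + C \<le> 0"
      using that by (simp add: b0_def pos_divide_le_eq algebra_simps)
  qed
  moreover have "cball (x0 + theta *\<^sub>R u) r \<subseteq> qset M beta gamma"
    if "lamn < 0" "theta \<ge> (- b0 - sqrt (b0\<^sup>2 - lamn * C)) / lamn" for theta
    using ball_in_Q concave_quadratic_nonpos_beyond_larger_root[OF that(1) C that(2)] by blast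
  ultimately show ?thesis unfolding Let_def C_def[symmetric] b0_def[symmetric] by blast
qed

end
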